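(* Let $\Gamma$ be a geometric distance-regular graph with diameter $D\geq 2$ and intersection number $c_2\geq 2$. Then (i) $\tau_2\geq \psi_1$, and (ii) $\Gamma$ contains an induced quadrangle (a set of four vertices inducing a $4$-cycle).
   Context: A finite connected graph $\Gamma$ with diameter $D$ is distance-regular if there are integers $b_i,c_i$ ($0\le i\le D$) such that for any vertices $x,y$ with $d(x,y)=i$, exactly $c_i$ neighbours of $y$ are at distance $i-1$ from $x$ and exactly $b_i$ neighbours of $y$ are at distance $i+1$ from $x$; its valency is $k=b_0$. Let $\theta_D$ be the smallest eigenvalue of the adjacency matrix. A Delsarte clique is a clique with exactly $1+\frac{k}{-\theta_D}$ vertices. A non-complete distance-regular graph is geometric with respect to a set $\mathcal C$ of Delsarte cliques if every edge lies in exactly one member of $\mathcal C$; it is geometric if such $\mathcal C$ exists. For a vertex $x$ and a set $C$, $d(x,C)=\min_{y\in C}d(x,y)$. It is known that for a Delsarte clique $C$ and a vertex $x$ with $d(x,C)=1$, the number of vertices of $C$ adjacent to $x$ depends only on the intersection numbers of $\Gamma$; this number is denoted $\psi_1$. It is also known that if $\Gamma$ is geometric with respect to $\mathcal C$, then for vertices $x,y$ with $d(x,y)=2$ the number of cliques $C\in\mathcal C$ with $y\in C$ and $d(x,C)=1$ depends neither on the pair $x,y$ nor on the choice of $\mathcal C$; this number is denoted $\tau_2$. *)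

theory Defs
  imports Complex_Main
begin

definition simple_graph :: "'a set \<Rightarrow> ('a \<Rightarrow> 'a \<Rightarrow> bool) \<Rightarrow> bool" where
  "simple_graph V E \<longleftrightarrow> finite V \<and> V \<noteq> {} \<and>
     (\<forall>x y. E x y \<longrightarrow> x \<in> V \<and> y \<in> V) \<and>
     (\<forall>x y. E x y \<longrightarrow> E y x) \<and> (\<forall>x. \<not> E x x)"

definition gdist :: "('a \<Rightarrow> 'a \<Rightarrow> bool) \<Rightarrow> 'a \<Rightarrow> 'a \<Rightarrow> nat" where
  "gdist E x y = (LEAST n. (E ^^ n) x y)"

definition connected_graph :: "'a set \<Rightarrow> ('a \<Rightarrow> 'a \<Rightarrow> bool) \<Rightarrow> bool" where
  "connected_graph V E \<longleftrightarrow> (\<forall>x\<in>V. \<forall>y\<in>V. \<exists>n. (E ^^ n) x y)"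

definition diameter :: "'a set \<Rightarrow> ('a \<Rightarrow> 'a \<Rightarrow> bool) \<Rightarrow> nat" where
  "diameter V E = Max {gdist E x y | x y. x \<in> V \<and> y \<in> V}"

definition distance_regular ::
  "'a set \<Rightarrow> ('a \<Rightarrow> 'a \<Rightarrow> bool) \<Rightarrow> (nat \<Rightarrow> nat) \<Rightarrow> (nat \<Rightarrow> nat) \<Rightarrow> bool" where
  "distance_regular V E b c \<longleftrightarrow> simple_graph V E \<and> connected_graph V E \<and>
     (\<forall>x\<in>V. \<forall>y\<in>V. \<forall>i. gdist E x y = i \<longrightarrow> i \<le> diameter V E \<longrightarrow>
        card {z\<in>V. E y z \<and> gdist E x z + 1 = i} = c i \<and>
        card {z\<in>V. E y z \<and> gdist E x z = i + 1} = b i)"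

text \<open>Eigenvalues of the adjacency matrix (real symmetric, so real eigenvalues
  with real eigenvectors).\<close>
definition adj_eigenvalue :: "'a set \<Rightarrow> ('a \<Rightarrow> 'a \<Rightarrow> bool) \<Rightarrow> real \<Rightarrow> bool" where
  "adj_eigenvalue V E \<theta> \<longleftrightarrow> (\<exists>f :: 'a \<Rightarrow> real. (\<exists>x\<in>V. f x \<noteq> 0) \<and>
     (\<forall>x\<in>V. (\<Sum>y\<in>{y\<in>V. E x y}. f y) = \<theta> * f x))"

definition smallest_eigenvalue :: "'a set \<Rightarrow> ('a \<Rightarrow> 'a \<Rightarrow> bool) \<Rightarrow> real" where
  "smallest_eigenvalue V E = Min {\<theta>. adj_eigenvalue V E \<theta>}"

definition is_clique :: "'a set \<Rightarrow> ('a \<Rightarrow> 'a \<Rightarrow> bool) \<Rightarrow> 'a set \<Rightarrow> bool" where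
  "is_clique V E C \<longleftrightarrow> C \<subseteq> V \<and> (\<forall>x\<in>C. \<forall>y\<in>C. x \<noteq> y \<longrightarrow> E x y)"

definition delsarte_clique ::
  "'a set \<Rightarrow> ('a \<Rightarrow> 'a \<Rightarrow> bool) \<Rightarrow> nat \<Rightarrow> 'a set \<Rightarrow> bool" where
  "delsarte_clique V E k C \<longleftrightarrow> is_clique V E C \<and>
     real (card C) = 1 + real k / (- smallest_eigenvalue V E)"

definition complete_graph :: "'a set \<Rightarrow> ('a \<Rightarrow> 'a \<Rightarrow> bool) \<Rightarrow> bool" where
  "complete_graph V E \<longleftrightarrow> (\<forall>x\<in>V. \<forall>y\<in>V. x \<noteq> y \<longrightarrow> E x y)"

definition geometric_wrt ::
  "'a set \<Rightarrow> ('a \<Rightarrow> 'a \<Rightarrow> bool) \<Rightarrow> nat \<Rightarrow> 'a set set \<Rightarrow> bool" where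
  "geometric_wrt V E k \<C> \<longleftrightarrow> \<not> complete_graph V E \<and>
     (\<forall>C\<in>\<C>. delsarte_clique V E k C) \<and>
     (\<forall>x y. E x y \<longrightarrow> (\<exists>!C. C \<in> \<C> \<and> x \<in> C \<and> y \<in> C))"

definition setdist :: "('a \<Rightarrow> 'a \<Rightarrow> bool) \<Rightarrow> 'a \<Rightarrow> 'a set \<Rightarrow> nat" where
  "setdist E x C = Min (gdist E x ` C)"

text \<open>Quantity whose (constant) value is psi_1: neighbours of x in C, where d(x,C)=1.\<close>
definition psi1_count :: "('a \<Rightarrow> 'a \<Rightarrow> bool) \<Rightarrow> 'a \<Rightarrow> 'a set \<Rightarrow> nat" where
  "psi1_count E x C = card {y\<in>C. E x y}"

text \<open>Quantity whose (constant) value is tau_2: for d(x,y)=2, the number of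
  cliques C in the family with y in C and d(x,C)=1.\<close>
definition tau2_count :: "('a \<Rightarrow> 'a \<Rightarrow> bool) \<Rightarrow> 'a set set \<Rightarrow> 'a \<Rightarrow> 'a \<Rightarrow> nat" where
  "tau2_count E \<C> x y = card {C\<in>\<C>. y \<in> C \<and> setdist E x C = 1}"

definition has_induced_quadrangle :: "'a set \<Rightarrow> ('a \<Rightarrow> 'a \<Rightarrow> bool) \<Rightarrow> bool" where
  "has_induced_quadrangle V E \<longleftrightarrow> (\<exists>a\<in>V. \<exists>b\<in>V. \<exists>c\<in>V. \<exists>d\<in>V.
     distinct [a, b, c, d] \<and> E a b \<and> E b c \<and> E c d \<and> E d a \<and> \<not> E a c \<and> \<not> E b d)"

end

theory Submission
  imports Defs "HOL-Computational_Algebra.Polynomial"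
begin

text \<open>
  Let \<theta> be the smallest eigenvalue and u its cosine sequence. For any clique C the function
  F z = \<Sum>y\<in>C. u (d y z) is a \<theta>-eigenfunction; if C is a Delsarte clique it vanishes on C,
  and as its norm is a combination of its values on C, it vanishes everywhere. Evaluated at a
  vertex x with d(x, C) = 1 this reads \<psi>1 (u 1 - u 2) = - |C| u 2, so \<psi>1 depends only on
  the intersection numbers.

  (i) If d(x, y) = 2, w is a common neighbour and D \<in> \<C> contains x and w, then the cliques of
  \<C> through y and its neighbours in D are pairwise distinct and at distance 1 from x, so
  \<psi>1 \<le> \<tau>2. (ii) Without induced quadrangles the c 2 \<ge> 2 common neighbours of x and y are
  pairwise adjacent, and comparing \<psi>1 at x and at a common neighbour shows that a Delsarte
  clique through y and one common neighbour contains all of them. The cliques of \<C> through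
  x, w and through y, w then share an edge, hence coincide, which makes x and y adjacent.
\<close>

lemma degree_diff_eq_left:
  fixes p q :: "'a::ab_group_add poly"
  shows "degree q < degree p \<Longrightarrow> degree (p - q) = degree p"
  using degree_add_eq_left[of "- q" p] by simp

lemma degree_monic_linear_mult:
  fixes p :: "'a::idom poly"
  shows "p \<noteq> 0 \<Longrightarrow> degree ([:x, 1:] * p) = degree p + 1"
  by (subst degree_mult_eq) auto

locale distance_regular_graph =
  fixes V :: "'a set" and E :: "'a \<Rightarrow> 'a \<Rightarrow> bool" and b c :: "nat \<Rightarrow> nat"
  assumes distance_regular: "distance_regular V E b c"
    and diameter_ge_2: "diameter V E \<ge> 2"
begin

abbreviation "d \<equiv> gdist E"
abbreviation "D \<equiv> diameter V E"
abbreviation "k \<equiv> b 0"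

lemma finite_V: "finite V"
  and V_nonempty: "V \<noteq> {}"
  and adj_in_V: "E x y \<Longrightarrow> x \<in> V \<and> y \<in> V"
  and adj_sym: "E x y \<Longrightarrow> E y x"
  and adj_irrefl: "\<not> E x x"
  using distance_regular unfolding distance_regular_def simple_graph_def by auto

lemma walk_in_V: "(E ^^ n) x y \<Longrightarrow> x \<in> V \<Longrightarrow> y \<in> V"
  by (induction n arbitrary: y) (auto elim!: relpowp_Suc_E dest: adj_in_V)

lemma walk_sym: "(E ^^ n) x y \<Longrightarrow> (E ^^ n) y x"
proof (induction n arbitrary: y)
  case (Suc n)
  then obtain z where "(E ^^ n) x z" "E z y" by (auto elim!: relpowp_Suc_E)
  with Suc.IH show ?case by (metis adj_sym relpowp_Suc_I2)
qed simp

lemma walk_gdist: "x \<in> V \<Longrightarrow> y \<in> V \<Longrightarrow> (E ^^ d x y) x y"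
  using distance_regular unfolding distance_regular_def connected_graph_def gdist_def
  by (meson LeastI_ex)

lemma gdist_le_walk: "(E ^^ n) x y \<Longrightarrow> d x y \<le> n"
  unfolding gdist_def by (rule Least_le)

lemma gdist_self: "d x x = 0"
  using gdist_le_walk[of 0 x x] by simp

lemma gdist_eq_0D: "d x y = 0 \<Longrightarrow> x \<in> V \<Longrightarrow> y \<in> V \<Longrightarrow> x = y"
  using walk_gdist[of x y] by simp

lemma gdist_adj: "E x y \<Longrightarrow> d x y = 1"
  using gdist_le_walk[of 1 x y] gdist_eq_0D[of x y] adj_in_V adj_irrefl
  by (fastforce simp: le_Suc_eq)

lemma gdist_eq_1_iff: "x \<in> V \<Longrightarrow> y \<in> V \<Longrightarrow> d x y = 1 \<longleftrightarrow> E x y"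
  using walk_gdist[of x y] gdist_adj by auto

lemma gdist_triangle: "x \<in> V \<Longrightarrow> y \<in> V \<Longrightarrow> z \<in> V \<Longrightarrow> d x z \<le> d x y + d y z"
  using walk_gdist[of x y] walk_gdist[of y z] relpowp_trans gdist_le_walk by metis

lemma gdist_sym: "x \<in> V \<Longrightarrow> y \<in> V \<Longrightarrow> d x y = d y x"
  by (metis walk_gdist walk_sym gdist_le_walk le_antisym)

lemma gdist_adj_bounds: "E y z \<Longrightarrow> x \<in> V \<Longrightarrow> d x z \<le> d x y + 1 \<and> d x y \<le> d x z + 1"
  using gdist_triangle[of x y z] gdist_triangle[of x z y] gdist_adj[of y z] gdist_adj[of z y]
    adj_sym adj_in_V by fastforce

lemma finite_distances: "finite {d x y | x y. x \<in> V \<and> y \<in> V}"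
proof -
  have "{d x y | x y. x \<in> V \<and> y \<in> V} = (\<lambda>(x, y). d x y) ` (V \<times> V)" by auto
  then show ?thesis using finite_V by simp
qed

lemma gdist_le_diameter: "x \<in> V \<Longrightarrow> y \<in> V \<Longrightarrow> d x y \<le> D"
  unfolding diameter_def using finite_distances by (intro Max_ge) auto

lemma diameter_attained: "\<exists>x\<in>V. \<exists>y\<in>V. d x y = D"
proof -
  have "D \<in> {d x y | x y. x \<in> V \<and> y \<in> V}"
    unfolding diameter_def using finite_distances V_nonempty by (intro Max_in) auto
  then obtain x y where "D = d x y" "x \<in> V" "y \<in> V" by auto
  then show ?thesis by metis
qed

lemma ex_vertex_with_all_distances: "\<exists>x\<in>V. \<forall>i\<le>D. \<exists>w\<in>V. d x w = i"
proof -
  obtain x y where xy: "x \<in> V" "y \<in> V" "d x y = D" using diameter_attained by blast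
  have "\<exists>w\<in>V. d x w = i" if i: "i \<le> D" for i
  proof -
    have "(E ^^ (i + (D - i))) x y" using walk_gdist[OF xy(1,2)] xy(3) i by simp
    then obtain w where w: "(E ^^ i) x w" "(E ^^ (D - i)) w y" by (auto simp: relpowp_add)
    have wV: "w \<in> V" using walk_in_V w(1) xy(1) by blast
    have "d x w \<le> i" "d w y \<le> D - i" using gdist_le_walk w by auto
    moreover have "D \<le> d x w + d w y" using gdist_triangle[OF xy(1) wV xy(2)] xy(3) by simp
    ultimately show ?thesis using wV i by (intro bexI[of _ w]) auto
  qed
  then show ?thesis using xy by blast
qed

lemma intersection_numbers:
  assumes "x \<in> V" "y \<in> V"
  shows "card {z\<in>V. E y z \<and> d x z + 1 = d x y} = c (d x y)"
    and "card {z\<in>V. E y z \<and> d x z = d x y + 1} = b (d x y)"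
  using distance_regular gdist_le_diameter assms unfolding distance_regular_def by blast+

definition nbhd :: "'a \<Rightarrow> 'a set" where
  "nbhd z = {w\<in>V. E z w}"

lemma finite_nbhd: "finite (nbhd z)"
  unfolding nbhd_def using finite_V by simp

lemma card_nbhd: "z \<in> V \<Longrightarrow> card (nbhd z) = k"
proof -
  assume z: "z \<in> V"
  have "nbhd z = {w\<in>V. E z w \<and> d z w = d z z + 1}"
    unfolding nbhd_def using gdist_adj gdist_self by auto
  then show ?thesis using intersection_numbers(2)[OF z z] gdist_self by simp
qed

definition a :: "nat \<Rightarrow> real" where
  "a i = real k - real (b i) - real (c i)"

lemma c_0: "c 0 = 0"
proof -
  obtain x where "x \<in> V" using V_nonempty by auto
  then show ?thesis using intersection_numbers(1)[of x x] gdist_self by simp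
qed

lemma a_0: "a 0 = 0"
  unfolding a_def using c_0 by simp

lemma c_pos: "1 \<le> i \<Longrightarrow> i \<le> D \<Longrightarrow> c i > 0"
proof -
  assume i: "1 \<le> i" "i \<le> D"
  obtain x where x: "x \<in> V" "\<forall>i\<le>D. \<exists>w\<in>V. d x w = i" using ex_vertex_with_all_distances by blast
  then obtain w where w: "w \<in> V" "d x w = i" using i by blast
  obtain j where j: "i = Suc j" using i by (cases i) auto
  have "(E ^^ Suc j) x w" using walk_gdist[OF x(1) w(1)] w j by simp
  then obtain z where z: "(E ^^ j) x z" "E z w" by (auto elim: relpowp_Suc_E)
  have "d x z \<le> j" using gdist_le_walk z by auto
  moreover have "d x w \<le> d x z + 1" using gdist_adj_bounds[OF z(2) x(1)] by auto
  ultimately have "z \<in> {z\<in>V. E w z \<and> d x z + 1 = d x w}" using z adj_in_V adj_sym[OF z(2)] w j by auto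
  then have "card {z\<in>V. E w z \<and> d x z + 1 = d x w} > 0" using finite_V by (auto simp: card_gt_0_iff)
  then show ?thesis using intersection_numbers(1)[OF x(1) w(1)] w by simp
qed

lemma c_1: "c 1 = 1"
proof -
  obtain x where x: "x \<in> V" "\<forall>i\<le>D. \<exists>w\<in>V. d x w = i"
    using ex_vertex_with_all_distances by blast
  moreover have "1 \<le> D" using diameter_ge_2 by simp
  ultimately obtain y where xy: "x \<in> V" "y \<in> V" "d x y = 1" by blast
  have "{z\<in>V. E y z \<and> d x z + 1 = d x y} = {x}"
    using xy gdist_eq_1_iff[of x y] adj_sym[of x y] gdist_eq_0D[of x] gdist_self by auto
  then show ?thesis using intersection_numbers(1)[OF xy(1,2)] xy(3) by simp
qed

lemma b_diameter: "b D = 0"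
proof -
  obtain x y where xy: "x \<in> V" "y \<in> V" "d x y = D" using diameter_attained by blast
  have "{z\<in>V. E y z \<and> d x z = d x y + 1} = {}" using gdist_le_diameter xy by fastforce
  then show ?thesis using intersection_numbers(2)[OF xy(1,2)] xy(3) by (metis card.empty)
qed

lemma sum_nbhd_distance:
  assumes y: "y \<in> V" and z: "z \<in> V"
  shows "(\<Sum>w\<in>nbhd z. h (d y w)) = real (c (d y z)) * h (d y z - 1) + a (d y z) * h (d y z)
           + real (b (d y z)) * h (d y z + 1)"
proof -
  define j where "j = d y z"
  define A1 where "A1 = {w\<in>V. E z w \<and> d y w + 1 = j}"
  define A2 where "A2 = {w\<in>V. E z w \<and> d y w = j}"
  define A3 where "A3 = {w\<in>V. E z w \<and> d y w = j + 1}"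
  have card13: "card A1 = c j" "card A3 = b j"
    using intersection_numbers[OF y z] unfolding A1_def A3_def j_def by auto
  have fin: "finite A1" "finite A2" "finite A3" unfolding A1_def A2_def A3_def using finite_V by auto
  have split: "nbhd z = A1 \<union> A2 \<union> A3"
  proof
    show "nbhd z \<subseteq> A1 \<union> A2 \<union> A3"
    proof
      fix w assume "w \<in> nbhd z"
      then have w: "E z w" "w \<in> V" unfolding nbhd_def by auto
      then have "d y w \<le> j + 1" "j \<le> d y w + 1" using gdist_adj_bounds[of z w y] y unfolding j_def by auto
      then show "w \<in> A1 \<union> A2 \<union> A3" using w unfolding A1_def A2_def A3_def by auto
    qed
  qed (auto simp: nbhd_def A1_def A2_def A3_def)
  have disj: "A1 \<inter> A2 = {}" "(A1 \<union> A2) \<inter> A3 = {}" unfolding A1_def A2_def A3_def by auto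
  have "card (nbhd z) = card A1 + card A2 + card A3"
    using split disj fin by (simp add: card_Un_disjoint)
  then have card2: "real (card A2) = a j" using card_nbhd[OF z] card13 unfolding a_def by simp
  have "(\<Sum>w\<in>nbhd z. h (d y w))
      = (\<Sum>w\<in>A1. h (d y w)) + (\<Sum>w\<in>A2. h (d y w)) + (\<Sum>w\<in>A3. h (d y w))"
    using split disj fin by (simp add: sum.union_disjoint)
  also have "(\<Sum>w\<in>A1. h (d y w)) = (\<Sum>w\<in>A1. h (j - 1))"
    by (rule sum.cong) (auto simp: A1_def)
  also have "(\<Sum>w\<in>A2. h (d y w)) = (\<Sum>w\<in>A2. h j)"
    by (rule sum.cong) (auto simp: A2_def)
  also have "(\<Sum>w\<in>A3. h (d y w)) = (\<Sum>w\<in>A3. h (j + 1))"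
    by (rule sum.cong) (auto simp: A3_def)
  finally show ?thesis using card13 card2 unfolding j_def by simp
qed

definition eigenfun :: "real \<Rightarrow> ('a \<Rightarrow> real) \<Rightarrow> bool" where
  "eigenfun \<theta> g \<longleftrightarrow> (\<forall>x\<in>V. (\<Sum>y\<in>nbhd x. g y) = \<theta> * g x)"

lemma adj_eigenvalue_iff: "adj_eigenvalue V E \<theta> \<longleftrightarrow> (\<exists>g. eigenfun \<theta> g \<and> (\<exists>x\<in>V. g x \<noteq> 0))"
  unfolding adj_eigenvalue_def eigenfun_def nbhd_def by auto

definition sphere_sum :: "('a \<Rightarrow> real) \<Rightarrow> 'a \<Rightarrow> nat \<Rightarrow> real" where
  "sphere_sum g x i = (\<Sum>z\<in>{z\<in>V. d x z = i}. g z)"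

lemma sphere_sum_eigenfun:
  assumes g: "eigenfun \<theta> g" and x: "x \<in> V"
  shows "\<theta> * sphere_sum g x i = (\<Sum>w\<in>V. g w * real (card {z\<in>nbhd w. d x z = i}))"
proof -
  let ?S = "{z\<in>V. d x z = i}"
  have "\<theta> * sphere_sum g x i = (\<Sum>z\<in>?S. \<Sum>w\<in>nbhd z. g w)"
    using g unfolding sphere_sum_def eigenfun_def by (simp add: sum_distrib_left)
  also have "\<dots> = (\<Sum>z\<in>?S. \<Sum>w\<in>V. if E z w then g w else 0)"
    unfolding nbhd_def using finite_V by (simp add: sum.inter_filter)
  also have "\<dots> = (\<Sum>w\<in>V. \<Sum>z\<in>?S. if E z w then g w else 0)"
    by (rule sum.swap)
  also have "\<dots> = (\<Sum>w\<in>V. g w * real (card {z\<in>nbhd w. d x z = i}))"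
  proof (rule sum.cong)
    fix w assume "w \<in> V"
    have "{z\<in>?S. E z w} = {z\<in>nbhd w. d x z = i}" unfolding nbhd_def using adj_sym by blast
    then show "(\<Sum>z\<in>?S. if E z w then g w else 0) = g w * real (card {z\<in>nbhd w. d x z = i})"
      using finite_V by (simp add: sum.inter_filter[symmetric])
  qed simp
  finally show ?thesis .
qed

lemma card_nbhd_at_distance:
  assumes x: "x \<in> V" and w: "w \<in> V"
  shows "real (card {z\<in>nbhd w. d x z = i}) =
     (if d x w = i + 1 then real (c (i + 1)) else 0) + (if d x w = i then a i else 0)
     + (if i \<noteq> 0 \<and> d x w = i - 1 then real (b (i - 1)) else 0)"
proof -
  have "real (card {z\<in>nbhd w. d x z = i}) = (\<Sum>z\<in>nbhd w. (\<lambda>t. if t = i then 1 else 0) (d x z))"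
    using finite_nbhd by (simp add: sum.inter_filter[symmetric])
  also have "\<dots> = real (c (d x w)) * (if d x w - 1 = i then 1 else 0)
      + a (d x w) * (if d x w = i then 1 else 0) + real (b (d x w)) * (if d x w + 1 = i then 1 else 0)"
    by (rule sum_nbhd_distance[OF x w])
  finally show ?thesis using c_0 by (cases "d x w"; cases i) auto
qed

lemma sphere_sum_recurrence:
  assumes g: "eigenfun \<theta> g" and x: "x \<in> V"
  shows "\<theta> * sphere_sum g x i = real (c (i + 1)) * sphere_sum g x (i + 1) + a i * sphere_sum g x i
          + (if i = 0 then 0 else real (b (i - 1)) * sphere_sum g x (i - 1))"
proof -
  have "\<theta> * sphere_sum g x i = (\<Sum>w\<in>V. (if d x w = i + 1 then real (c (i + 1)) * g w else 0)
      + (if d x w = i then a i * g w else 0)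
      + (if i \<noteq> 0 \<and> d x w = i - 1 then real (b (i - 1)) * g w else 0))"
    unfolding sphere_sum_eigenfun[OF g x]
    by (rule sum.cong) (simp_all add: card_nbhd_at_distance[OF x] algebra_simps)
  also have "\<dots> = real (c (i + 1)) * sphere_sum g x (i + 1) + a i * sphere_sum g x i
          + (if i = 0 then 0 else real (b (i - 1)) * sphere_sum g x (i - 1))"
    unfolding sphere_sum_def using finite_V
    by (simp add: sum.distrib sum.inter_filter[symmetric] sum_distrib_left)
  finally show ?thesis .
qed

text \<open>The polynomials v_i of Brouwer, Cohen and Neumaier: for a \<theta>-eigenfunction, the sum over
  the sphere of radius i is v_i(\<theta>) times the value at the centre.\<close>
fun v_poly :: "nat \<Rightarrow> real poly" where
  "v_poly 0 = 1"
| "v_poly (Suc 0) = [:0, 1:]"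
| "v_poly (Suc (Suc i)) = smult (1 / real (c (Suc (Suc i))))
     ([:- a (Suc i), 1:] * v_poly (Suc i) - smult (real (b i)) (v_poly i))"

abbreviation v :: "real \<Rightarrow> nat \<Rightarrow> real" where
  "v \<theta> i \<equiv> poly (v_poly i) \<theta>"

lemma v_recurrence:
  "c (i + 2) \<noteq> 0 \<Longrightarrow>
   real (c (i + 2)) * v \<theta> (i + 2) = (\<theta> - a (i + 1)) * v \<theta> (i + 1) - real (b i) * v \<theta> i"
  by (simp add: numeral_2_eq_2 algebra_simps)

lemma degree_v_poly: "i \<le> D \<Longrightarrow> degree (v_poly i) = i"
proof (induction i rule: v_poly.induct)
  case (3 i)
  have c: "c (Suc (Suc i)) \<noteq> 0" using c_pos[of "Suc (Suc i)"] "3.prems" by simp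
  have nz: "v_poly (Suc i) \<noteq> 0" using "3.IH"(1) "3.prems" by fastforce
  have lin: "degree ([:- a (Suc i), 1:] * v_poly (Suc i)) = Suc (Suc i)"
    by (subst degree_monic_linear_mult[OF nz]) (use "3.IH"(1) "3.prems" in simp)
  have "degree (v_poly (Suc (Suc i)))
      = degree ([:- a (Suc i), 1:] * v_poly (Suc i) - smult (real (b i)) (v_poly i))"
    by (subst v_poly.simps(3), subst degree_smult_eq) (simp add: c)
  also have "\<dots> = Suc (Suc i)"
    by (subst degree_diff_eq_left) (use lin "3.IH"(2) "3.prems" in auto)
  finally show ?case .
qed simp_all

lemma sphere_sum_eq_v:
  assumes g: "eigenfun \<theta> g" and x: "x \<in> V" and i: "i \<le> D"
  shows "sphere_sum g x i = v \<theta> i * g x"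
proof -
  have "sphere_sum g x i = v \<theta> i * g x \<and> sphere_sum g x (i + 1) = v \<theta> (i + 1) * g x"
    if "i + 1 \<le> D" for i
    using that
  proof (induction i)
    case 0
    have "{z\<in>V. d x z = 0} = {x}" "{z\<in>V. d x z = 1} = nbhd x"
      using x gdist_eq_0D gdist_self gdist_eq_1_iff unfolding nbhd_def by auto
    then show ?case using g x unfolding sphere_sum_def eigenfun_def by simp
  next
    case (Suc i)
    then have IH: "sphere_sum g x i = v \<theta> i * g x" "sphere_sum g x (i + 1) = v \<theta> (i + 1) * g x"
      by simp_all
    have c: "c (i + 2) \<noteq> 0" using c_pos[of "i + 2"] Suc.prems by simp
    have "real (c (i + 2)) * sphere_sum g x (i + 2)
        = \<theta> * sphere_sum g x (i + 1) - a (i + 1) * sphere_sum g x (i + 1) - real (b i) * sphere_sum g x i"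
      using sphere_sum_recurrence[OF g x, of "i + 1"] by (simp add: numeral_2_eq_2)
    also have "\<dots> = ((\<theta> - a (i + 1)) * v \<theta> (i + 1) - real (b i) * v \<theta> i) * g x"
      using IH by (simp add: algebra_simps del: v_poly.simps)
    also have "\<dots> = real (c (i + 2)) * (v \<theta> (i + 2) * g x)"
      unfolding v_recurrence[OF c, symmetric] by simp
    finally show ?case using IH c by (simp add: numeral_2_eq_2 del: v_poly.simps)
  qed
  then show ?thesis using i diameter_ge_2 by (cases i) auto
qed

definition eigen_poly :: "real poly" where
  "eigen_poly = [:- a D, 1:] * v_poly D - smult (real (b (D - 1))) (v_poly (D - 1))"

lemma poly_eigen_poly:
  "poly eigen_poly \<theta> = (\<theta> - a D) * v \<theta> D - real (b (D - 1)) * v \<theta> (D - 1)"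
  unfolding eigen_poly_def by (simp add: algebra_simps)

text \<open>The recurrence of sphere sums at i = D closes up because the sphere of radius D + 1 is
  empty.\<close>
lemma eigen_poly_root:
  assumes g: "eigenfun \<theta> g" and x: "x \<in> V" and gx: "g x \<noteq> 0"
  shows "poly eigen_poly \<theta> = 0"
proof -
  have empty: "{z\<in>V. d x z = D + 1} = {}" using gdist_le_diameter x by fastforce
  have "sphere_sum g x (D + 1) = 0" unfolding sphere_sum_def empty by simp
  then have "\<theta> * sphere_sum g x D = a D * sphere_sum g x D + real (b (D - 1)) * sphere_sum g x (D - 1)"
    using sphere_sum_recurrence[OF g x, of D] diameter_ge_2 by simp
  then have "poly eigen_poly \<theta> * g x = 0"
    unfolding poly_eigen_poly using sphere_sum_eq_v[OF g x] by (simp add: algebra_simps)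
  then show ?thesis using gx by simp
qed

lemma eigen_poly_nonzero: "eigen_poly \<noteq> 0"
proof -
  have "v_poly D \<noteq> 0" using degree_v_poly[of D] diameter_ge_2 by fastforce
  then have "degree ([:- a D, 1:] * v_poly D) = D + 1"
    by (subst degree_monic_linear_mult) (use degree_v_poly[of D] in simp_all)
  moreover have "degree (smult (real (b (D - 1))) (v_poly (D - 1))) < D + 1"
    using degree_v_poly[of "D - 1"] by (simp; linarith)
  ultimately have "degree eigen_poly = D + 1"
    unfolding eigen_poly_def by (simp only: degree_diff_eq_left)
  then show ?thesis by auto
qed

lemma finite_eigenvalues: "finite {\<theta>. adj_eigenvalue V E \<theta>}"
  by (rule finite_subset[OF _ poly_roots_finite[OF eigen_poly_nonzero]])
    (auto simp: adj_eigenvalue_iff dest: eigen_poly_root)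

lemma eigenfun_const: "eigenfun (real k) (\<lambda>_. 1)"
  unfolding eigenfun_def using card_nbhd by simp

lemma adj_eigenvalue_smallest: "adj_eigenvalue V E (smallest_eigenvalue V E)"
proof -
  have "adj_eigenvalue V E (real k)" using eigenfun_const V_nonempty adj_eigenvalue_iff by force
  then show ?thesis unfolding smallest_eigenvalue_def using Min_in[OF finite_eigenvalues] by auto
qed

definition sphere_size :: "nat \<Rightarrow> real" where
  "sphere_size i = v (real k) i"

lemma card_sphere: "x \<in> V \<Longrightarrow> i \<le> D \<Longrightarrow> real (card {z\<in>V. d x z = i}) = sphere_size i"
  using sphere_sum_eq_v[OF eigenfun_const, of x i] unfolding sphere_sum_def sphere_size_def by simp

lemma sphere_size_pos: "i \<le> D \<Longrightarrow> sphere_size i > 0"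
proof -
  assume i: "i \<le> D"
  obtain x where x: "x \<in> V" "\<forall>i\<le>D. \<exists>w\<in>V. d x w = i" using ex_vertex_with_all_distances by blast
  then have "{z\<in>V. d x z = i} \<noteq> {}" using i by blast
  then have "card {z\<in>V. d x z = i} > 0" using finite_V by (simp add: card_gt_0_iff)
  then show ?thesis using card_sphere[OF x(1) i] by simp
qed

lemma sphere_size_0: "sphere_size 0 = 1"
  and sphere_size_1: "sphere_size 1 = real k"
  unfolding sphere_size_def by simp_all

lemma k_pos: "real k > 0"
  using sphere_size_pos[of 1] sphere_size_1 diameter_ge_2 by simp

lemma sphere_size_Suc: "i < D \<Longrightarrow> real (b i) * sphere_size i = real (c (i + 1)) * sphere_size (i + 1)"
proof (induction i)
  case 0
  then show ?case using sphere_size_0 sphere_size_1 c_1 by simp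
next
  case (Suc i)
  have c: "c (i + 2) \<noteq> 0" using c_pos[of "i + 2"] Suc.prems by simp
  have "real (c (i + 2)) * sphere_size (i + 2)
      = (real k - a (i + 1)) * sphere_size (i + 1) - real (b i) * sphere_size i"
    using v_recurrence[OF c, of "real k"] unfolding sphere_size_def by simp
  also have "\<dots> = real (b (i + 1)) * sphere_size (i + 1)"
    using Suc unfolding a_def by (simp add: algebra_simps)
  finally show ?case by (simp add: numeral_2_eq_2)
qed

definition cosine :: "real \<Rightarrow> nat \<Rightarrow> real" where
  "cosine \<theta> i = v \<theta> i / sphere_size i"

lemma cosine_0: "cosine \<theta> 0 = 1"
  and cosine_1: "cosine \<theta> 1 = \<theta> / real k"
  unfolding cosine_def sphere_size_0 sphere_size_1 by simp_all

lemma v_three_term: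
  assumes root: "poly eigen_poly \<theta> = 0" and j: "j \<le> D"
  shows "(if j = 0 then 0 else real (b (j - 1)) * v \<theta> (j - 1)) + a j * v \<theta> j
         + (if j < D then real (c (j + 1)) * v \<theta> (j + 1) else 0) = \<theta> * v \<theta> j"
proof -
  consider "j = 0" | "j = D" | i where "j = i + 1" "i + 2 \<le> D"
    using j by (cases j) force+
  then show ?thesis
  proof cases
    case 1
    then show ?thesis using a_0 c_1 diameter_ge_2 by simp
  next
    case 2
    then show ?thesis using root diameter_ge_2 unfolding poly_eigen_poly by (simp add: algebra_simps)
  next
    case 3
    have "c (i + 2) \<noteq> 0" using c_pos[of "i + 2"] 3 by simp
    from v_recurrence[OF this, of \<theta>] show ?thesis
      using 3 by (simp add: numeral_2_eq_2 algebra_simps del: v_poly.simps)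
  qed
qed

lemma cosine_recurrence:
  assumes root: "poly eigen_poly \<theta> = 0" and j: "j \<le> D"
  shows "real (c j) * cosine \<theta> (j - 1) + a j * cosine \<theta> j + real (b j) * cosine \<theta> (j + 1)
         = \<theta> * cosine \<theta> j"
proof -
  have kj: "sphere_size j > 0" using sphere_size_pos[OF j] .
  have lower: "real (c j) * sphere_size j * cosine \<theta> (j - 1)
      = (if j = 0 then 0 else real (b (j - 1)) * v \<theta> (j - 1))"
  proof (cases j)
    case (Suc i)
    then have "real (c j) * sphere_size j = real (b i) * sphere_size i"
      using sphere_size_Suc[of i] j by simp
    then show ?thesis using Suc sphere_size_pos[of i] j unfolding cosine_def by simp
  qed (simp add: c_0)
  have upper: "real (b j) * sphere_size j * cosine \<theta> (j + 1)
      = (if j < D then real (c (j + 1)) * v \<theta> (j + 1) else 0)"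
    using sphere_size_Suc[of j] sphere_size_pos[of "j + 1"] b_diameter j unfolding cosine_def by auto
  have "sphere_size j * (real (c j) * cosine \<theta> (j - 1) + a j * cosine \<theta> j
      + real (b j) * cosine \<theta> (j + 1)) = sphere_size j * (\<theta> * cosine \<theta> j)"
    using v_three_term[OF root j] lower upper kj unfolding cosine_def
    by (simp add: algebra_simps del: v_poly.simps)
  then show ?thesis using kj by simp
qed

lemma eigenfun_cosine:
  assumes root: "poly eigen_poly \<theta> = 0" and y: "y \<in> V"
  shows "eigenfun \<theta> (\<lambda>z. cosine \<theta> (d y z))"
  unfolding eigenfun_def
  using sum_nbhd_distance[OF y] cosine_recurrence[OF root gdist_le_diameter[OF y]] by simp

lemma sum_distance_weighted:
  assumes g: "eigenfun \<theta> g" and x: "x \<in> V"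
  shows "(\<Sum>z\<in>V. h (d x z) * g z) = (\<Sum>i\<le>D. h i * v \<theta> i) * g x"
proof -
  have "(\<Sum>z\<in>V. h (d x z) * g z) = (\<Sum>i\<le>D. \<Sum>z\<in>{z\<in>V. d x z = i}. h (d x z) * g z)"
    by (rule sum.group[symmetric]) (use finite_V gdist_le_diameter x in auto)
  also have "\<dots> = (\<Sum>i\<le>D. h i * sphere_sum g x i)"
    unfolding sphere_sum_def by (rule sum.cong) (auto simp: sum_distrib_left)
  also have "\<dots> = (\<Sum>i\<le>D. h i * v \<theta> i * g x)"
    by (rule sum.cong) (auto simp: sphere_sum_eq_v[OF g x])
  finally show ?thesis by (simp add: sum_distrib_right)
qed

lemma eigenfun_sum_cosine:
  assumes root: "poly eigen_poly \<theta> = 0" and C: "C \<subseteq> V"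
  shows "eigenfun \<theta> (\<lambda>z. \<Sum>y\<in>C. cosine \<theta> (d y z))"
  unfolding eigenfun_def
proof
  fix x assume "x \<in> V"
  have "(\<Sum>w\<in>nbhd x. \<Sum>y\<in>C. cosine \<theta> (d y w)) = (\<Sum>y\<in>C. \<Sum>w\<in>nbhd x. cosine \<theta> (d y w))"
    by (rule sum.swap)
  also have "\<dots> = (\<Sum>y\<in>C. \<theta> * cosine \<theta> (d y x))"
  proof (rule sum.cong)
    fix y assume "y \<in> C"
    then show "(\<Sum>w\<in>nbhd x. cosine \<theta> (d y w)) = \<theta> * cosine \<theta> (d y x)"
      using eigenfun_cosine[OF root] C \<open>x \<in> V\<close> unfolding eigenfun_def by blast
  qed simp
  finally show "(\<Sum>w\<in>nbhd x. \<Sum>y\<in>C. cosine \<theta> (d y w)) = \<theta> * (\<Sum>y\<in>C. cosine \<theta> (d y x))"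
    by (simp add: sum_distrib_left)
qed

lemma finite_clique: "is_clique V E C \<Longrightarrow> finite C"
  unfolding is_clique_def using finite_V rev_finite_subset by auto

lemma sum_cosine_clique:
  assumes C: "is_clique V E C" and y: "y \<in> C"
  shows "(\<Sum>y'\<in>C. cosine \<theta> (d y' y)) = 1 + (real (card C) - 1) * \<theta> / real k"
proof -
  have fin: "finite C" using finite_clique[OF C] .
  then have "card C > 0" using y by (auto simp: card_gt_0_iff)
  then have card: "real (card (C - {y})) = real (card C) - 1"
    using y by (simp add: card_Diff_singleton of_nat_diff)
  have "(\<Sum>y'\<in>C. cosine \<theta> (d y' y)) = cosine \<theta> (d y y) + (\<Sum>y'\<in>C - {y}. cosine \<theta> (d y' y))"
    using sum.remove[OF fin y] by simp
  also have "(\<Sum>y'\<in>C - {y}. cosine \<theta> (d y' y)) = (\<Sum>y'\<in>C - {y}. cosine \<theta> 1)"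
  proof (rule sum.cong)
    fix y' assume "y' \<in> C - {y}"
    then have "E y' y" using C y unfolding is_clique_def by auto
    then show "cosine \<theta> (d y' y) = cosine \<theta> 1" using gdist_adj by simp
  qed simp
  finally show ?thesis using card cosine_0 cosine_1 gdist_self by simp
qed

lemma delsarte_sum_cosine_eq_0:
  assumes root: "poly eigen_poly \<theta> = 0" and C: "is_clique V E C"
    and size: "(real (card C) - 1) * \<theta> = - real k" and z: "z \<in> V"
  shows "(\<Sum>y\<in>C. cosine \<theta> (d y z)) = 0"
proof -
  have CV: "C \<subseteq> V" using C unfolding is_clique_def by auto
  define F where "F z = (\<Sum>y\<in>C. cosine \<theta> (d y z))" for z
  have F: "eigenfun \<theta> F" unfolding F_def by (rule eigenfun_sum_cosine[OF root CV])
  have F_C: "F y = 0" if "y \<in> C" for y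
    using sum_cosine_clique[OF C that, of \<theta>] size k_pos unfolding F_def by (simp add: field_simps)
  have "(\<Sum>z\<in>V. F z * F z) = (\<Sum>z\<in>V. \<Sum>y\<in>C. cosine \<theta> (d y z) * F z)"
    by (simp only: F_def sum_distrib_right)
  also have "\<dots> = (\<Sum>y\<in>C. \<Sum>z\<in>V. cosine \<theta> (d y z) * F z)"
    by (rule sum.swap)
  also have "\<dots> = (\<Sum>y\<in>C. (\<Sum>i\<le>D. cosine \<theta> i * v \<theta> i) * F y)"
    using sum_distance_weighted[OF F] CV by (intro sum.cong) auto
  also have "\<dots> = 0" using F_C by simp
  finally have "(\<Sum>z\<in>V. F z * F z) = 0" .
  then have "F z * F z = 0" using sum_nonneg_eq_0_iff[of V "\<lambda>z. F z * F z"] finite_V z by simp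
  then show ?thesis unfolding F_def by simp
qed

lemma setdist_eq_1I:
  assumes C: "C \<subseteq> V" and x: "x \<in> V" "x \<notin> C" and y: "y \<in> C" "E x y"
  shows "setdist E x C = 1"
  unfolding setdist_def
proof (rule Min_eqI)
  show "finite (d x ` C)" using C finite_V finite_subset by blast
  show "1 \<in> d x ` C" using y gdist_adj by force
  fix t assume "t \<in> d x ` C"
  then obtain z where "z \<in> C" "t = d x z" by auto
  then show "1 \<le> t" using gdist_eq_0D[of x z] x C by (cases t) auto
qed

lemma setdist_eq_1D:
  assumes C: "is_clique V E C" "C \<noteq> {}" and x: "x \<in> V" and sd: "setdist E x C = 1"
  shows "x \<notin> C" and "y \<in> C \<Longrightarrow> d y x = (if E x y then 1 else 2)"
proof -
  have CV: "C \<subseteq> V" and fin: "finite C" using C(1) finite_clique unfolding is_clique_def by auto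
  have Min: "Min (d x ` C) = 1" using sd unfolding setdist_def .
  have ge: "d x y \<ge> 1" if "y \<in> C" for y
    using Min_le[of "d x ` C" "d x y"] fin that Min by auto
  show "x \<notin> C" using ge gdist_self by fastforce
  have "1 \<in> d x ` C" using Min_in[of "d x ` C"] fin C(2) Min by auto
  then obtain y0 where y0: "y0 \<in> C" "d x y0 = 1" by auto
  assume y: "y \<in> C"
  have "d y0 y \<le> 1" using C(1) y y0 gdist_self gdist_adj unfolding is_clique_def
    by (cases "y = y0") auto
  moreover have "y0 \<in> V" "y \<in> V" using y0 y CV by auto
  then have "d x y \<le> d x y0 + d y0 y" by (rule gdist_triangle[OF x])
  ultimately have "d x y \<le> 2" using y0 by linarith
  moreover have "d x y = 1 \<longleftrightarrow> E x y" using gdist_eq_1_iff x y CV by auto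
  ultimately have "d x y = (if E x y then 1 else 2)" using ge[OF y] by auto
  then show "d y x = (if E x y then 1 else 2)" using gdist_sym x y CV by auto
qed

lemma psi1_count_delsarte_formula:
  assumes root: "poly eigen_poly \<theta> = 0" and C: "is_clique V E C" "C \<noteq> {}"
    and size: "(real (card C) - 1) * \<theta> = - real k"
    and x: "x \<in> V" and sd: "setdist E x C = 1"
  shows "real (psi1_count E x C) * (cosine \<theta> 1 - cosine \<theta> 2) = - real (card C) * cosine \<theta> 2"
proof -
  have fin: "finite C" using finite_clique[OF C(1)] .
  have "0 = (\<Sum>y\<in>C. cosine \<theta> (d y x))" using delsarte_sum_cosine_eq_0[OF root C(1) size x] by simp
  also have "\<dots> = (\<Sum>y\<in>C. cosine \<theta> 2 + (if E x y then cosine \<theta> 1 - cosine \<theta> 2 else 0))"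
    by (rule sum.cong) (auto simp: setdist_eq_1D[OF C x sd])
  also have "\<dots> = real (card C) * cosine \<theta> 2 + real (psi1_count E x C) * (cosine \<theta> 1 - cosine \<theta> 2)"
    using fin by (simp add: sum.distrib sum.inter_filter[symmetric] psi1_count_def)
  finally show ?thesis by simp
qed

definition psi1 :: real where
  "psi1 = (let \<theta> = smallest_eigenvalue V E
           in (1 + real k / - \<theta>) * cosine \<theta> 2 / (cosine \<theta> 2 - cosine \<theta> 1))"

lemma psi1_count_delsarte:
  assumes C: "delsarte_clique V E k C" "card C \<ge> 2" and x: "x \<in> V" and sd: "setdist E x C = 1"
  shows "real (psi1_count E x C) = psi1"
proof -
  define \<theta> where "\<theta> = smallest_eigenvalue V E"
  have clique: "is_clique V E C" and card: "real (card C) = 1 + real k / - \<theta>"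
    using C(1) unfolding delsarte_clique_def \<theta>_def by auto
  have neg: "\<theta> < 0"
  proof (rule ccontr)
    assume "\<not> \<theta> < 0"
    then have "real k / - \<theta> \<le> 0" by (simp add: divide_nonneg_nonpos)
    then show False using card C(2) by simp
  qed
  have size: "(real (card C) - 1) * \<theta> = - real k" using card neg by (simp add: field_simps)
  obtain g y where "eigenfun \<theta> g" "y \<in> V" "g y \<noteq> 0"
    using adj_eigenvalue_smallest adj_eigenvalue_iff unfolding \<theta>_def by blast
  then have root: "poly eigen_poly \<theta> = 0" by (rule eigen_poly_root)
  have Cne: "C \<noteq> {}" using C(2) by auto
  note eq = psi1_count_delsarte_formula[OF root clique Cne size x sd]
  have "cosine \<theta> 1 \<noteq> cosine \<theta> 2"
  proof
    assume "cosine \<theta> 1 = cosine \<theta> 2"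
    then have "cosine \<theta> 1 = 0" using eq Cne finite_clique[OF clique] by simp
    then show False using cosine_1 neg k_pos by simp
  qed
  with eq show ?thesis unfolding psi1_def \<theta>_def[symmetric] Let_def card[symmetric]
    by (simp add: field_simps)
qed

lemma gdist_2_nonadj:
  assumes "x \<in> V" "y \<in> V" "d x y = 2"
  shows "\<not> E x y" "x \<noteq> y"
  using assms gdist_adj gdist_self by auto

lemma card_common_nbhd:
  assumes x: "x \<in> V" and y: "y \<in> V" and xy: "d x y = 2"
  shows "card {z\<in>V. E x z \<and> E y z} = c 2"
proof -
  have "{z\<in>V. E y z \<and> d x z + 1 = d x y} = {z\<in>V. E x z \<and> E y z}"
    using xy gdist_eq_1_iff x by auto
  then show ?thesis using intersection_numbers(1)[OF x y] xy by simp
qed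

lemma ex_gdist_2: "\<exists>x\<in>V. \<exists>y\<in>V. d x y = 2"
  using ex_vertex_with_all_distances diameter_ge_2 by blast

lemma ex_common_nbhd:
  assumes "x \<in> V" "y \<in> V" "d x y = 2"
  obtains w where "E x w" "E y w"
proof -
  have "card {z\<in>V. E x z \<and> E y z} > 0"
    using card_common_nbhd[OF assms] c_pos[of 2] diameter_ge_2 by simp
  then show ?thesis using that by (fastforce simp: card_gt_0_iff)
qed

lemma common_nbhd_adj:
  assumes "\<not> has_induced_quadrangle V E" and x: "x \<in> V" "y \<in> V" "\<not> E x y" "x \<noteq> y"
    and w: "E x w" "E y w" "E x w'" "E y w'" "w \<noteq> w'"
  shows "E w w'"
proof (rule ccontr)
  assume "\<not> E w w'"
  then have "has_induced_quadrangle V E"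
    unfolding has_induced_quadrangle_def
    using x w adj_sym[OF w(2)] adj_sym[OF w(3)] adj_irrefl adj_in_V
    by (intro bexI[of _ x] bexI[of _ w] bexI[of _ y] bexI[of _ w']) auto
  then show False using assms(1) by contradiction
qed

text \<open>Without induced quadrangles, a common neighbour w' of x and y outside C would be adjacent
  to y and to all neighbours of x in C, so it would have more neighbours in C than x has.\<close>
lemma common_nbhd_subset_delsarte:
  assumes no_quad: "\<not> has_induced_quadrangle V E" and x: "x \<in> V" "y \<in> V" "\<not> E x y" "x \<noteq> y"
    and C: "delsarte_clique V E k C" "card C \<ge> 2" "y \<in> C" "w \<in> C" "E x w"
  shows "{z\<in>V. E x z \<and> E y z} \<subseteq> C"
proof
  have clique: "is_clique V E C" and CV: "C \<subseteq> V" using C(1) unfolding delsarte_clique_def is_clique_def by auto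
  have adj_C: "E u u'" if "u \<in> C" "u' \<in> C" "u \<noteq> u'" for u u'
    using clique that unfolding is_clique_def by blast
  fix w' assume w': "w' \<in> {z\<in>V. E x z \<and> E y z}"
  show "w' \<in> C"
  proof (rule ccontr)
    assume "w' \<notin> C"
    have x_C: "x \<notin> C" using adj_C[OF _ C(3)] x by auto
    have "insert y {u\<in>C. E x u} \<subseteq> {u\<in>C. E w' u}"
    proof -
      have "E w' u" if "u \<in> C" "E x u" for u
      proof -
        have "u \<noteq> y" using that x by auto
        then have "E y u" using adj_C[OF C(3) that(1)] by simp
        moreover have "u \<noteq> w'" using that \<open>w' \<notin> C\<close> by auto
        ultimately have "E u w'" using common_nbhd_adj[OF no_quad x] w' that by blast
        then show ?thesis by (rule adj_sym)
      qed
      then show ?thesis using w' C(3) adj_sym[of y w'] by auto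
    qed
    then have "card (insert y {u\<in>C. E x u}) \<le> psi1_count E w' C"
      unfolding psi1_count_def using finite_clique[OF clique] by (intro card_mono) auto
    moreover have "card (insert y {u\<in>C. E x u}) = psi1_count E x C + 1"
      unfolding psi1_count_def using finite_clique[OF clique] x by simp
    ultimately have "psi1_count E x C < psi1_count E w' C" by simp
    moreover have "setdist E x C = 1" by (rule setdist_eq_1I[OF CV x(1) x_C C(4,5)])
    moreover have "setdist E w' C = 1"
      using setdist_eq_1I[OF CV _ \<open>w' \<notin> C\<close> C(3)] w' adj_sym by blast
    ultimately show False using psi1_count_delsarte[OF C(1,2)] x(1) w' by (metis of_nat_eq_iff less_irrefl mem_Collect_eq)
  qed
qed

end

locale geometric_distance_regular_graph = distance_regular_graph +
  fixes \<C> :: "'a set set"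
  assumes geometric: "geometric_wrt V E (b 0) \<C>"
begin

lemma delsarte_clique_family: "C \<in> \<C> \<Longrightarrow> delsarte_clique V E k C"
  using geometric unfolding geometric_wrt_def by auto

lemma clique_family_adj: "C \<in> \<C> \<Longrightarrow> x \<in> C \<Longrightarrow> y \<in> C \<Longrightarrow> x \<noteq> y \<Longrightarrow> E x y"
  using delsarte_clique_family unfolding delsarte_clique_def is_clique_def by blast

lemma clique_family_subset: "C \<in> \<C> \<Longrightarrow> C \<subseteq> V"
  using delsarte_clique_family unfolding delsarte_clique_def is_clique_def by blast

lemma ex1_clique_family: "E x y \<Longrightarrow> \<exists>!C. C \<in> \<C> \<and> x \<in> C \<and> y \<in> C"
  using geometric unfolding geometric_wrt_def by auto

lemma clique_family_eq:
  "C \<in> \<C> \<Longrightarrow> C' \<in> \<C> \<Longrightarrow> E x y \<Longrightarrow> x \<in> C \<Longrightarrow> y \<in> C \<Longrightarrow> x \<in> C' \<Longrightarrow> y \<in> C' \<Longrightarrow> C = C'"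
  using ex1_clique_family[of x y] by blast

lemma card_delsarte_ge_2:
  assumes C: "delsarte_clique V E k C"
  shows "card C \<ge> 2"
proof -
  obtain x y where xy: "x \<in> V" "y \<in> V" "d x y = 2" using ex_gdist_2 by blast
  then obtain w where "E x w" by (rule ex_common_nbhd)
  then obtain C' where C': "C' \<in> \<C>" "x \<in> C'" "w \<in> C'" using ex1_clique_family by blast
  have "x \<noteq> w" using \<open>E x w\<close> adj_irrefl by auto
  then have "card {x, w} \<le> card C'"
    using C' clique_family_subset[OF C'(1)] finite_V by (intro card_mono) (auto intro: finite_subset)
  moreover have "real (card C) = real (card C')"
    using C delsarte_clique_family[OF C'(1)] unfolding delsarte_clique_def by simp
  ultimately show ?thesis using \<open>x \<noteq> w\<close> by simp
qed

lemma psi1_count_le_tau2_count: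
  assumes C: "C \<in> \<C>" "x \<in> C" and y: "y \<in> V" "\<not> E x y" "x \<noteq> y"
  shows "psi1_count E y C \<le> tau2_count E \<C> x y"
proof -
  define T where "T = {u\<in>C. E y u}"
  define \<C>' where "\<C>' = {C'\<in>\<C>. y \<in> C' \<and> setdist E x C' = 1}"
  define clique_of where "clique_of u = (THE C'. C' \<in> \<C> \<and> y \<in> C' \<and> u \<in> C')" for u
  have clique_of: "clique_of u \<in> \<C>" "y \<in> clique_of u" "u \<in> clique_of u" if "u \<in> T" for u
    using theI'[OF ex1_clique_family[of y u]] that unfolding clique_of_def T_def by auto
  have "clique_of u \<in> \<C>'" if u: "u \<in> T" for u
  proof -
    have "u \<in> C" "u \<noteq> x" using u y adj_sym[of y x] unfolding T_def by auto
    then have "E x u" using clique_family_adj[OF C] by simp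
    moreover have "x \<notin> clique_of u"
      using clique_family_adj[OF clique_of(1,2)[OF u], of x] y adj_sym[of y x] by blast
    ultimately have "setdist E x (clique_of u) = 1"
      using setdist_eq_1I[OF clique_family_subset[OF clique_of(1)[OF u]]]
        clique_family_subset[OF C(1)] C(2) clique_of(3)[OF u] by blast
    then show ?thesis unfolding \<C>'_def using clique_of[OF u] by simp
  qed
  moreover have "inj_on clique_of T"
  proof
    fix u u' assume u: "u \<in> T" "u' \<in> T" "clique_of u = clique_of u'"
    show "u = u'"
    proof (rule ccontr)
      assume "u \<noteq> u'"
      then have "E u u'" using clique_family_adj[OF C(1)] u unfolding T_def by auto
      then have "clique_of u = C"
        using clique_family_eq[OF clique_of(1)[OF u(1)] C(1)] clique_of(3) u unfolding T_def by auto
      then show False using clique_of(2)[OF u(1)] clique_family_adj[OF C] y by auto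
    qed
  qed
  moreover have "\<C>' \<subseteq> Pow V" using clique_family_subset unfolding \<C>'_def by blast
  then have "finite \<C>'" using finite_V by (simp add: finite_subset)
  ultimately have "card T \<le> card \<C>'" by (intro card_inj_on_le) auto
  then show ?thesis unfolding psi1_count_def tau2_count_def T_def \<C>'_def .
qed

theorem psi1_le_tau2:
  assumes C: "delsarte_clique V E k C" and x: "x \<in> V" "setdist E x C = 1"
    and yz: "y \<in> V" "z \<in> V" "d y z = 2"
  shows "psi1_count E x C \<le> tau2_count E \<C> y z"
proof -
  obtain w where w: "E y w" "E z w" using ex_common_nbhd[OF yz] .
  then obtain C' where C': "C' \<in> \<C>" "y \<in> C'" "w \<in> C'" using ex1_clique_family by blast
  note nonadj = gdist_2_nonadj[OF yz]
  have "z \<notin> C'" using clique_family_adj[OF C'(1,2)] nonadj by auto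
  then have "setdist E z C' = 1"
    using setdist_eq_1I[OF clique_family_subset[OF C'(1)] yz(2) _ C'(3)] w adj_sym by blast
  moreover have "delsarte_clique V E k C'" using delsarte_clique_family[OF C'(1)] .
  ultimately have "real (psi1_count E z C') = psi1"
    using psi1_count_delsarte card_delsarte_ge_2 yz(2) by blast
  moreover have "real (psi1_count E x C) = psi1"
    using psi1_count_delsarte[OF C card_delsarte_ge_2[OF C] x] .
  ultimately show ?thesis
    using psi1_count_le_tau2_count[OF C'(1,2) yz(2) nonadj] by simp
qed

theorem has_induced_quadrangle:
  assumes c2: "c 2 \<ge> 2"
  shows "has_induced_quadrangle V E"
proof (rule ccontr)
  assume no_quad: "\<not> has_induced_quadrangle V E"
  obtain x y where xy: "x \<in> V" "y \<in> V" "d x y = 2" using ex_gdist_2 by blast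
  note nonadj = gdist_2_nonadj[OF xy]
  define W where "W = {z\<in>V. E x z \<and> E y z}"
  have card_W: "card W \<ge> 2" using card_common_nbhd[OF xy] c2 unfolding W_def by simp
  then obtain w where w: "w \<in> W" by fastforce
  have "card (W - {w}) \<ge> 1" using card_W w by (simp add: card_Diff_singleton)
  then have "W - {w} \<noteq> {}" by (metis card.empty not_one_le_zero)
  then obtain w' where w': "w' \<in> W" "w' \<noteq> w" by blast
  have adj_w: "E x w" "E y w" using w W_def by auto
  obtain C where C: "C \<in> \<C>" "y \<in> C" "w \<in> C" using ex1_clique_family[OF adj_w(2)] by blast
  obtain C' where C': "C' \<in> \<C>" "x \<in> C'" "w \<in> C'" using ex1_clique_family[OF adj_w(1)] by blast
  have delsarte: "delsarte_clique V E k C" "delsarte_clique V E k C'"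
    using delsarte_clique_family C(1) C'(1) by auto
  have "W \<subseteq> C"
    unfolding W_def using common_nbhd_subset_delsarte[OF no_quad xy(1,2) nonadj delsarte(1)
        card_delsarte_ge_2[OF delsarte(1)] C(2,3) adj_w(1)] .
  moreover have "{z\<in>V. E y z \<and> E x z} \<subseteq> C'"
    using common_nbhd_subset_delsarte[OF no_quad xy(2,1) _ _ delsarte(2)
        card_delsarte_ge_2[OF delsarte(2)] C'(2,3) adj_w(2)] nonadj adj_sym by blast
  then have "W \<subseteq> C'" unfolding W_def by blast
  moreover have "E w w'"
    using common_nbhd_adj[OF no_quad xy(1,2) nonadj] w w' W_def by auto
  ultimately have "C = C'" using clique_family_eq[OF C(1) C'(1)] w w' by blast
  then show False using clique_family_adj[OF C(1,2)] C'(2) nonadj adj_sym by blast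
qed

end

theorem lemma4p2:
  fixes V :: "'a set" and E :: "'a \<Rightarrow> 'a \<Rightarrow> bool"
    and b c :: "nat \<Rightarrow> nat" and \<C> :: "'a set set"
  assumes drg: "distance_regular V E b c"
    and diam: "diameter V E \<ge> 2"
    and c2: "c 2 \<ge> 2"
    and geom: "geometric_wrt V E (b 0) \<C>"
  shows "(\<forall>C x u v. delsarte_clique V E (b 0) C \<and> x \<in> V \<and> setdist E x C = 1 \<and>
            u \<in> V \<and> v \<in> V \<and> gdist E u v = 2 \<longrightarrow>
            tau2_count E \<C> u v \<ge> psi1_count E x C)
         \<and> has_induced_quadrangle V E"
proof -
  interpret geometric_distance_regular_graph V E b c \<C>
    by unfold_locales (fact drg diam geom)+
  show ?thesis using psi1_le_tau2 has_induced_quadrangle[OF c2] by blast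
qed

end
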